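(* Let $K$ be a field, $P$ an arbitrary poset, and let $P=\bigsqcup_{i\in I}P_i$ be the decomposition of $P$ into its connected components. For $\alpha\in FI(P)$ and $i\in I$ let $\alpha_i\in FI(P_i)$ be the restriction $\alpha_i(x,y)=\alpha(x,y)$ for $x\le y$ in $P_i$. Then $\alpha$ is superregular in $FI(P)$ if and only if for every $i\in I$, $\alpha_i$ is either $0$ or invertible in $FI(P_i)$. (Equivalently, identifying $FI(P)$ with $\prod_{i\in I}FI(P_i)$, the set of superregular elements equals $\prod_{i\in I}U(P_i)^0$, where $U(P_i)$ is the group of units of $FI(P_i)$ and $U(P_i)^0=U(P_i)\cup\{0\}$.)
   Context: $K$ is a field, $P$ an arbitrary poset. $I(P)$ is the set of functions $\alpha$ assigning to each pair $x\le y$ in $P$ a value $\alpha(x,y)\in K$. An element $\alpha\in I(P)$ is a finitary series if for all $x<y$ in $P$ there are only finitely many pairs $(u,v)$ with $x\le u<v\le y$ and $\alpha(u,v)\neq0$; $FI(P)$ is the set of finitary series. $FI(P)$ is an associative $K$-algebra under pointwise addition and convolution $(\alpha\beta)(x,y)=\sum_{x\le z\le y}\alpha(x,z)\beta(z,y)$. Connected components of $P$ are the classes of the equivalence relation generated by comparability. An element $\alpha$ of an algebra $A$ is superregular if it is regular (some $\chi\in A$ has $\alpha\chi\alpha=\alpha$) and there is exactly one $\alpha^*\in A$ satisfying $\alpha\alpha^*\alpha=\alpha$ and $\alpha^*\alpha\alpha^*=\alpha^*$. *)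

theory Defs
  imports Main
begin

text \<open>A poset is represented by a carrier set P inside a type of class order
 (the order on P is the restriction of the type's order).\<close>

definition incidence :: "'a::order set \<Rightarrow> ('a \<Rightarrow> 'a \<Rightarrow> 'k::field) set" where
  "incidence P = {a. \<forall>x y. a x y \<noteq> 0 \<longrightarrow> x \<in> P \<and> y \<in> P \<and> x \<le> y}"

definition finitary :: "'a::order set \<Rightarrow> ('a \<Rightarrow> 'a \<Rightarrow> 'k::field) \<Rightarrow> bool" where
  "finitary P a \<longleftrightarrow> (\<forall>x\<in>P. \<forall>y\<in>P. x < y \<longrightarrow>
      finite {(u, v). u \<in> P \<and> v \<in> P \<and> x \<le> u \<and> u < v \<and> v \<le> y \<and> a u v \<noteq> 0})"

definition FI :: "'a::order set \<Rightarrow> ('a \<Rightarrow> 'a \<Rightarrow> 'k::field) set" where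
  "FI P = {a \<in> incidence P. finitary P a}"

text \<open>Convolution.  The sum ranges over the z with a(x,z) nonzero, which is finite
 whenever a is finitary; all other terms vanish.\<close>
definition conv :: "'a::order set \<Rightarrow> ('a \<Rightarrow> 'a \<Rightarrow> 'k::field) \<Rightarrow> ('a \<Rightarrow> 'a \<Rightarrow> 'k) \<Rightarrow> ('a \<Rightarrow> 'a \<Rightarrow> 'k)" where
  "conv P a b = (\<lambda>x y. if x \<in> P \<and> y \<in> P \<and> x \<le> y
      then (\<Sum>z\<in>{z \<in> P. x \<le> z \<and> z \<le> y \<and> a x z \<noteq> 0}. a x z * b z y) else 0)"

definition one_FI :: "'a::order set \<Rightarrow> ('a \<Rightarrow> 'a \<Rightarrow> 'k::field)" where
  "one_FI P = (\<lambda>x y. if x \<in> P \<and> x = y then 1 else 0)"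

definition regular_in :: "'b set \<Rightarrow> ('b \<Rightarrow> 'b \<Rightarrow> 'b) \<Rightarrow> 'b \<Rightarrow> bool" where
  "regular_in A mult a \<longleftrightarrow> (\<exists>c\<in>A. mult (mult a c) a = a)"

definition superregular_in :: "'b set \<Rightarrow> ('b \<Rightarrow> 'b \<Rightarrow> 'b) \<Rightarrow> 'b \<Rightarrow> bool" where
  "superregular_in A mult a \<longleftrightarrow> a \<in> A \<and> regular_in A mult a \<and>
     (\<exists>!b. b \<in> A \<and> mult (mult a b) a = a \<and> mult (mult b a) b = b)"

definition invertible_in :: "'b set \<Rightarrow> ('b \<Rightarrow> 'b \<Rightarrow> 'b) \<Rightarrow> 'b \<Rightarrow> 'b \<Rightarrow> bool" where
  "invertible_in A mult one a \<longleftrightarrow> a \<in> A \<and> (\<exists>b\<in>A. mult a b = one \<and> mult b a = one)"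

definition comp_rel :: "'a::order set \<Rightarrow> ('a \<times> 'a) set" where
  "comp_rel P = {(x, y). x \<in> P \<and> y \<in> P \<and> (x \<le> y \<or> y \<le> x)}"

definition components :: "'a::order set \<Rightarrow> 'a set set" where
  "components P = (\<lambda>x. (comp_rel P)\<^sup>* `` {x}) ` P"

definition restrict_to :: "'a set \<Rightarrow> ('a \<Rightarrow> 'a \<Rightarrow> 'k::zero) \<Rightarrow> ('a \<Rightarrow> 'a \<Rightarrow> 'k)" where
  "restrict_to C a = (\<lambda>x y. if x \<in> C \<and> y \<in> C then a x y else 0)"

end

theory Submission
  imports Defs "HOL-Algebra.Ring"
begin

text \<open>
  An element has a unique reflexive generalized
  inverse (a b a = a, b a b = b) iff it is superregular.  In any ring, units and zero have
  unique reflexive inverses, and a unique reflexive inverse b of a satisfies the absorption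
  identities x ab = ba x ab and ba x = ba x ab for all x.

  Restriction to the connected components identifies FI(P) with the product of the FI(C),
  so superregularity can be decided componentwise.  On a connected poset, testing the
  absorption identities against the matrix units E(p, q) shows that the diagonal of ab is
  a constant idempotent scalar: if it is 0 then a = 0, if it is 1 then ab = ba = 1.
  Together these give the theorem: a is superregular iff each component of a is zero or
  invertible.
\<close>

lemma incidence_supportD:
  "a \<in> incidence Q \<Longrightarrow> a x y \<noteq> 0 \<Longrightarrow> x \<in> Q \<and> y \<in> Q \<and> x \<le> y"
  by (auto simp: incidence_def)

lemma FI_supportD: "a \<in> FI Q \<Longrightarrow> a x y \<noteq> 0 \<Longrightarrow> x \<in> Q \<and> y \<in> Q \<and> x \<le> y"
  by (auto simp: FI_def incidence_def)

lemma FI_incidence: "a \<in> FI Q \<Longrightarrow> a \<in> incidence Q"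
  by (simp add: FI_def)

definition strict_support :: "'a::order set \<Rightarrow> ('a \<Rightarrow> 'a \<Rightarrow> 'k::field) \<Rightarrow> 'a \<Rightarrow> 'a \<Rightarrow> ('a \<times> 'a) set" where
  "strict_support Q a x y = {(u, v). u \<in> Q \<and> v \<in> Q \<and> x \<le> u \<and> u < v \<and> v \<le> y \<and> a u v \<noteq> 0}"

lemma finite_strict_support:
  assumes "a \<in> FI Q" "x \<in> Q" "y \<in> Q"
  shows "finite (strict_support Q a x y)"
proof (cases "x < y")
  case True
  then show ?thesis using assms unfolding FI_def finitary_def strict_support_def by auto
next
  case False
  then have "strict_support Q a x y = {}"
    unfolding strict_support_def by (auto dest: le_less_trans less_le_trans)
  then show ?thesis by simp
qed

definition window :: "'a::order set \<Rightarrow> ('a \<Rightarrow> 'a \<Rightarrow> 'k::field) \<Rightarrow> 'a \<Rightarrow> 'a \<Rightarrow> 'a set" where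
  "window Q a x y = {x, y} \<union> fst ` strict_support Q a x y \<union> snd ` strict_support Q a x y"

lemma finite_window: "a \<in> FI Q \<Longrightarrow> x \<in> Q \<Longrightarrow> y \<in> Q \<Longrightarrow> finite (window Q a x y)"
  unfolding window_def using finite_strict_support by blast

lemma window_mem:
  assumes "a \<in> incidence Q" "a u v \<noteq> 0" "u \<noteq> v" "x \<le> u" "v \<le> y"
  shows "u \<in> window Q a x y" "v \<in> window Q a x y"
proof -
  have "(u, v) \<in> strict_support Q a x y"
    using assms incidence_supportD[OF assms(1,2)] by (auto simp: strict_support_def)
  then show "u \<in> window Q a x y" "v \<in> window Q a x y"
    unfolding window_def by force+
qed

lemma window_subset:
  "x \<in> Q \<Longrightarrow> y \<in> Q \<Longrightarrow> x \<le> y \<Longrightarrow> window Q a x y \<subseteq> {z \<in> Q. x \<le> z \<and> z \<le> y}"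
  by (auto simp: window_def strict_support_def intro: order_trans less_imp_le)

lemma finite_row_support:
  assumes "a \<in> FI Q" "x \<in> Q" "y \<in> Q"
  shows "finite {z \<in> Q. x \<le> z \<and> z \<le> y \<and> a x z \<noteq> 0}"
proof (rule finite_subset[OF _ finite_window[OF assms]])
  show "{z \<in> Q. x \<le> z \<and> z \<le> y \<and> a x z \<noteq> 0} \<subseteq> window Q a x y"
  proof
    fix z assume z: "z \<in> {z \<in> Q. x \<le> z \<and> z \<le> y \<and> a x z \<noteq> 0}"
    show "z \<in> window Q a x y"
    proof (cases "z = x")
      case False
      then show ?thesis using z window_mem(2)[OF FI_incidence[OF assms(1)], of x z x y] by auto
    qed (simp add: window_def)
  qed
qed

lemma conv_outside: "\<not> (x \<in> Q \<and> y \<in> Q \<and> x \<le> y) \<Longrightarrow> conv Q a b x y = 0"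
  unfolding conv_def by (simp only: if_False)

lemma conv_supportD: "conv Q a b x y \<noteq> 0 \<Longrightarrow> x \<in> Q \<and> y \<in> Q \<and> x \<le> y"
  using conv_outside by blast

lemma conv_sum:
  assumes a: "a \<in> FI Q" and b: "b \<in> incidence Q" and F: "finite F"
    and sub: "\<And>z. a x z \<noteq> 0 \<Longrightarrow> b z y \<noteq> 0 \<Longrightarrow> z \<in> F"
  shows "conv Q a b x y = (\<Sum>z\<in>F. a x z * b z y)"
proof (cases "x \<in> Q \<and> y \<in> Q \<and> x \<le> y")
  case True
  let ?S = "{z \<in> Q. x \<le> z \<and> z \<le> y \<and> a x z \<noteq> 0}"
  have "conv Q a b x y = (\<Sum>z\<in>?S. a x z * b z y)" using True by (simp add: conv_def)
  also have "\<dots> = (\<Sum>z\<in>F. a x z * b z y)"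
  proof (rule sum.mono_neutral_cong[OF F finite_row_support[OF a]])
    fix z assume "z \<in> F - ?S"
    then show "a x z * b z y = 0"
      using incidence_supportD[OF FI_incidence[OF a], of x z] incidence_supportD[OF b, of z y] by auto
  next
    fix z assume "z \<in> ?S - F"
    then show "a x z * b z y = 0" using sub by auto
  qed (use True in auto)
  finally show ?thesis .
next
  case False
  have zero: "a x z * b z y = 0" for z
    using False incidence_supportD[OF FI_incidence[OF a], of x z] incidence_supportD[OF b, of z y]
    by (auto intro: order_trans)
  show ?thesis unfolding conv_outside[OF False] zero sum.neutral_const ..
qed

text \<open>A nonzero entry (u, v), u < v, of a product inside [x, y] comes from a nonzero
  entry a(u, z) b(z, v); one of the two is off-diagonal, so both u and v lie in the
  windows of the factors.\<close>
lemma conv_support_window: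
  assumes a: "a \<in> FI Q" and b: "b \<in> FI Q"
    and uv: "x \<le> u" "u < v" "v \<le> y" "conv Q a b u v \<noteq> 0"
  shows "u \<in> window Q a x y \<union> window Q b x y" and "v \<in> window Q a x y \<union> window Q b x y"
proof -
  from uv(4) have "(\<Sum>z\<in>{z \<in> Q. u \<le> z \<and> z \<le> v \<and> a u z \<noteq> 0}. a u z * b z v) \<noteq> 0"
    by (simp add: conv_def split: if_splits)
  then obtain z where az: "a u z \<noteq> 0" and bz: "b z v \<noteq> 0"
    by (metis (no_types, lifting) mult_not_zero sum.neutral)
  have "u \<le> z" "z \<le> v" using FI_supportD[OF a az] FI_supportD[OF b bz] by blast+
  note wa = window_mem[OF FI_incidence[OF a]] and wb = window_mem[OF FI_incidence[OF b]]
  show "u \<in> window Q a x y \<union> window Q b x y"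
  proof (cases "u = z")
    case True
    then show ?thesis using wb(1)[OF bz _ _ uv(3)] uv(1,2) by auto
  next
    case False
    then show ?thesis using wa(1)[OF az _ uv(1)] \<open>z \<le> v\<close> uv(3) by (auto intro: order_trans)
  qed
  show "v \<in> window Q a x y \<union> window Q b x y"
  proof (cases "z = v")
    case True
    then show ?thesis using wa(2)[OF az _ uv(1)] uv(2,3) by auto
  next
    case False
    then show ?thesis using wb(2)[OF bz _ _ uv(3)] uv(1) \<open>u \<le> z\<close> by (auto intro: order_trans)
  qed
qed

lemma conv_FI:
  assumes a: "a \<in> FI Q" and b: "b \<in> FI Q"
  shows "conv Q a b \<in> FI Q"
proof -
  have "finite {(u, v). u \<in> Q \<and> v \<in> Q \<and> x \<le> u \<and> u < v \<and> v \<le> y \<and> conv Q a b u v \<noteq> 0}"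
    if xy: "x \<in> Q" "y \<in> Q" for x y
  proof (rule finite_subset)
    let ?T = "window Q a x y \<union> window Q b x y"
    show "{(u, v). u \<in> Q \<and> v \<in> Q \<and> x \<le> u \<and> u < v \<and> v \<le> y \<and> conv Q a b u v \<noteq> 0} \<subseteq> ?T \<times> ?T"
      using conv_support_window[OF a b] by blast
    show "finite (?T \<times> ?T)" using finite_window a b xy by blast
  qed
  moreover have "conv Q a b \<in> incidence Q"
    unfolding incidence_def using conv_supportD by blast
  ultimately show ?thesis by (simp add: FI_def finitary_def)
qed

text \<open>Associativity: all sums involved can be taken over one finite set, the union of the
  windows of the three factors on [x, y], which is closed under the relevant steps.\<close>
lemma conv_assoc:
  assumes a: "a \<in> FI Q" and b: "b \<in> FI Q" and c: "c \<in> FI Q"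
  shows "conv Q a (conv Q b c) = conv Q (conv Q a b) c"
proof (intro ext)
  fix x y
  show "conv Q a (conv Q b c) x y = conv Q (conv Q a b) c x y"
  proof (cases "x \<in> Q \<and> y \<in> Q \<and> x \<le> y")
    case False
    then show ?thesis by (simp only: conv_outside[OF False])
  next
    case True
    define T where "T = window Q a x y \<union> window Q b x y \<union> window Q c x y"
    have fin: "finite T" unfolding T_def using finite_window a b c True by blast
    have ends: "x \<in> T" "y \<in> T" by (auto simp: T_def window_def)
    have interval: "x \<le> z \<and> z \<le> y" if "z \<in> T" for z
      using that window_subset[of x Q y] True unfolding T_def by blast
    have factors: "h \<in> incidence Q" "window Q h x y \<subseteq> T" if "h \<in> {a, b, c}" for h
      using that FI_incidence a b c unfolding T_def by auto
    have right: "z \<in> T" if "u \<in> T" "h \<in> {a, b, c}" "h u z \<noteq> 0" "z \<le> y" for u h z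
      using that window_mem(2)[OF factors(1), of h u z x y] factors(2) interval[of u] by blast
    have left: "z \<in> T" if "v \<in> T" "h \<in> {a, b, c}" "h z v \<noteq> 0" "x \<le> z" for v h z
      using that window_mem(1)[OF factors(1), of h z v x y] factors(2) interval[of v] by blast
    have bc: "conv Q b c z y = (\<Sum>w\<in>T. b z w * c w y)" if "z \<in> T" for z
      using that FI_supportD[OF c] by (intro conv_sum[OF b FI_incidence[OF c] fin]) (auto intro: right)
    have ab: "conv Q a b x w = (\<Sum>z\<in>T. a x z * b z w)" if "w \<in> T" for w
    proof (rule conv_sum[OF a FI_incidence[OF b] fin])
      fix z assume "a x z \<noteq> 0" "b z w \<noteq> 0"
      moreover have "z \<le> y" using FI_supportD[OF b \<open>b z w \<noteq> 0\<close>] interval[OF that] by auto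
      ultimately show "z \<in> T" using right[OF ends(1), of a] by blast
    qed
    have "conv Q a (conv Q b c) x y = (\<Sum>z\<in>T. a x z * conv Q b c z y)"
      by (rule conv_sum[OF a FI_incidence[OF conv_FI[OF b c]] fin])
        (use right[OF ends(1), of a] conv_supportD in blast)
    also have "\<dots> = (\<Sum>z\<in>T. \<Sum>w\<in>T. a x z * b z w * c w y)"
      by (simp add: bc sum_distrib_left mult.assoc)
    also have "\<dots> = (\<Sum>w\<in>T. \<Sum>z\<in>T. a x z * b z w * c w y)"
      by (rule sum.swap)
    also have "\<dots> = (\<Sum>w\<in>T. conv Q a b x w * c w y)"
      by (simp add: ab sum_distrib_right)
    also have "\<dots> = conv Q (conv Q a b) c x y"
      by (rule conv_sum[OF conv_FI[OF a b] FI_incidence[OF c] fin, symmetric])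
        (use left[OF ends(2), of c] conv_supportD in blast)
    finally show ?thesis .
  qed
qed

lemma entrywise_FI:
  assumes a: "a \<in> FI Q" and b: "b \<in> FI Q" and f0: "f 0 0 = 0"
  shows "(\<lambda>x y. f (a x y) (b x y)) \<in> FI Q"
proof -
  have nz: "a x y \<noteq> 0 \<or> b x y \<noteq> 0" if "f (a x y) (b x y) \<noteq> 0" for x y
    using that f0 by auto
  have "(\<lambda>x y. f (a x y) (b x y)) \<in> incidence Q"
    unfolding incidence_def using nz FI_supportD[OF a] FI_supportD[OF b] by blast
  moreover have "finite {(u, v). u \<in> Q \<and> v \<in> Q \<and> x \<le> u \<and> u < v \<and> v \<le> y \<and> f (a u v) (b u v) \<noteq> 0}"
    if "x \<in> Q" "y \<in> Q" for x y
  proof (rule finite_subset)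
    show "{(u, v). u \<in> Q \<and> v \<in> Q \<and> x \<le> u \<and> u < v \<and> v \<le> y \<and> f (a u v) (b u v) \<noteq> 0}
        \<subseteq> strict_support Q a x y \<union> strict_support Q b x y"
      using nz unfolding strict_support_def by blast
    show "finite (strict_support Q a x y \<union> strict_support Q b x y)"
      using finite_strict_support[OF a that] finite_strict_support[OF b that] by simp
  qed
  ultimately show ?thesis by (simp add: FI_def finitary_def)
qed

lemma add_FI: "a \<in> FI Q \<Longrightarrow> b \<in> FI Q \<Longrightarrow> (\<lambda>x y. a x y + b x y) \<in> FI Q"
  using entrywise_FI[of a Q b "(+)"] by simp

lemma uminus_FI: "a \<in> FI Q \<Longrightarrow> (\<lambda>x y. - a x y) \<in> FI Q"
  using entrywise_FI[of a Q a "\<lambda>s t. - s"] by simp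

lemma zero_FI: "(\<lambda>x y. 0) \<in> FI Q"
  by (simp add: FI_def incidence_def finitary_def)

lemma one_FI_FI: "one_FI Q \<in> FI Q"
proof -
  have off_diagonal: "one_FI Q u v = 0" if "u < v" for u v
    using that by (simp add: one_FI_def less_imp_neq)
  have no_strict_support:
    "{(u, v). u \<in> Q \<and> v \<in> Q \<and> x \<le> u \<and> u < v \<and> v \<le> y \<and> one_FI Q u v \<noteq> 0} = {}" for x y
    using off_diagonal by blast
  have "finitary Q (one_FI Q)" unfolding finitary_def no_strict_support by simp
  moreover have "one_FI Q \<in> incidence Q" by (simp add: incidence_def one_FI_def)
  ultimately show ?thesis unfolding FI_def by simp
qed

lemma conv_one_left: "a \<in> incidence Q \<Longrightarrow> conv Q (one_FI Q) a = a"
proof (intro ext)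
  fix x y assume a: "a \<in> incidence Q"
  have "conv Q (one_FI Q) a x y = (\<Sum>z\<in>{x}. one_FI Q x z * a z y)"
    by (rule conv_sum[OF one_FI_FI a]) (simp_all add: one_FI_def split: if_splits)
  also have "\<dots> = a x y"
    using incidence_supportD[OF a, of x y] by (cases "x \<in> Q") (auto simp: one_FI_def)
  finally show "conv Q (one_FI Q) a x y = a x y" .
qed

lemma conv_one_right: "a \<in> FI Q \<Longrightarrow> conv Q a (one_FI Q) = a"
proof (intro ext)
  fix x y assume a: "a \<in> FI Q"
  have "conv Q a (one_FI Q) x y = (\<Sum>z\<in>{y}. a x z * one_FI Q z y)"
    by (rule conv_sum[OF a FI_incidence[OF one_FI_FI]]) (simp_all add: one_FI_def split: if_splits)
  also have "\<dots> = a x y"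
    using FI_supportD[OF a, of x y] by (cases "y \<in> Q") (auto simp: one_FI_def)
  finally show "conv Q a (one_FI Q) x y = a x y" .
qed

lemma conv_zero_left: "conv Q (\<lambda>x y. 0) a = (\<lambda>x y. 0)"
  unfolding conv_def by (intro ext) simp

lemma conv_add_right:
  "conv Q m (\<lambda>x y. h x y + k x y) = (\<lambda>x y. conv Q m h x y + conv Q m k x y)"
  unfolding conv_def by (intro ext) (simp add: distrib_left sum.distrib)

lemma conv_add_left:
  assumes h: "h \<in> FI Q" and k: "k \<in> FI Q" and m: "m \<in> incidence Q"
  shows "conv Q (\<lambda>x y. h x y + k x y) m = (\<lambda>x y. conv Q h m x y + conv Q k m x y)"
proof (intro ext)
  fix x y
  show "conv Q (\<lambda>x y. h x y + k x y) m x y = conv Q h m x y + conv Q k m x y"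
  proof (cases "x \<in> Q \<and> y \<in> Q \<and> x \<le> y")
    case False
    then show ?thesis by (simp only: conv_outside[OF False] add_0)
  next
    case True
    define F where "F = {z \<in> Q. x \<le> z \<and> z \<le> y \<and> h x z \<noteq> 0} \<union> {z \<in> Q. x \<le> z \<and> z \<le> y \<and> k x z \<noteq> 0}"
    have fin: "finite F" unfolding F_def using finite_row_support h k True by blast
    have in_F: "z \<in> F" if "h x z \<noteq> 0 \<or> k x z \<noteq> 0" "m z y \<noteq> 0" for z
      using that FI_supportD[OF h] FI_supportD[OF k] incidence_supportD[OF m] unfolding F_def by blast
    have "conv Q (\<lambda>x y. h x y + k x y) m x y = (\<Sum>z\<in>F. (h x z + k x z) * m z y)"
      by (rule conv_sum[OF add_FI[OF h k] m fin]) (rule in_F, auto)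
    moreover have "conv Q h m x y = (\<Sum>z\<in>F. h x z * m z y)"
      by (rule conv_sum[OF h m fin]) (use in_F in blast)
    moreover have "conv Q k m x y = (\<Sum>z\<in>F. k x z * m z y)"
      by (rule conv_sum[OF k m fin]) (use in_F in blast)
    ultimately show ?thesis by (simp add: distrib_right sum.distrib)
  qed
qed

definition FI_ring :: "'a::order set \<Rightarrow> ('a \<Rightarrow> 'a \<Rightarrow> 'k::field) ring" where
  "FI_ring Q = \<lparr>carrier = FI Q, mult = conv Q, one = one_FI Q,
     zero = (\<lambda>x y. 0), add = (\<lambda>a b x y. a x y + b x y)\<rparr>"

lemma FI_ring_simps [simp]:
  "carrier (FI_ring Q) = FI Q"
  "mult (FI_ring Q) = conv Q"
  "one (FI_ring Q) = one_FI Q"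
  "zero (FI_ring Q) = (\<lambda>x y. 0)"
  "add (FI_ring Q) = (\<lambda>a b x y. a x y + b x y)"
  by (simp_all add: FI_ring_def)

lemma FI_ring: "ring (FI_ring Q :: ('a::order \<Rightarrow> 'a \<Rightarrow> 'k::field) ring)"
proof (rule ringI)
  show "abelian_group (FI_ring Q :: ('a \<Rightarrow> 'a \<Rightarrow> 'k) ring)"
  proof (rule abelian_groupI)
    show "\<exists>b \<in> carrier (FI_ring Q). b \<oplus>\<^bsub>FI_ring Q\<^esub> a = \<zero>\<^bsub>FI_ring Q\<^esub>"
      if "a \<in> carrier (FI_ring Q :: ('a \<Rightarrow> 'a \<Rightarrow> 'k) ring)" for a
      using that by (intro bexI[of _ "\<lambda>x y. - a x y"]) (simp_all add: uminus_FI)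
  qed (auto simp: add_FI zero_FI add.assoc intro!: add.commute)
  show "monoid (FI_ring Q :: ('a \<Rightarrow> 'a \<Rightarrow> 'k) ring)"
    by (rule monoidI) (simp_all add: conv_FI one_FI_FI conv_one_left conv_one_right FI_incidence conv_assoc)
qed (simp_all add: conv_add_left conv_add_right FI_incidence)

section \<open>Reflexive generalized inverses in a ring\<close>

definition reflexive_inverse :: "('b, 'm) monoid_scheme \<Rightarrow> 'b \<Rightarrow> 'b \<Rightarrow> bool" where
  "reflexive_inverse R a b \<longleftrightarrow> b \<in> carrier R \<and> a \<otimes>\<^bsub>R\<^esub> b \<otimes>\<^bsub>R\<^esub> a = a \<and> b \<otimes>\<^bsub>R\<^esub> a \<otimes>\<^bsub>R\<^esub> b = b"

lemma (in monoid) reflexive_inverse_inv: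
  "a \<in> Units G \<Longrightarrow> reflexive_inverse G a (inv a)"
  by (simp add: reflexive_inverse_def Units_closed)

lemma (in monoid) reflexive_inverse_of_unit:
  assumes a: "a \<in> Units G" and b: "reflexive_inverse G a b"
  shows "b = inv a"
proof -
  have bc: "b \<in> carrier G" and aba: "a \<otimes> b \<otimes> a = a" using b by (simp_all add: reflexive_inverse_def)
  have "b = (inv a \<otimes> a) \<otimes> b \<otimes> (a \<otimes> inv a)"
    using a bc by (simp only: Units_l_inv Units_r_inv l_one r_one)
  also have "\<dots> = inv a \<otimes> (a \<otimes> b \<otimes> a) \<otimes> inv a"
    using a bc by (simp only: m_assoc Units_closed Units_inv_closed m_closed)
  also have "\<dots> = inv a" using a aba by (simp add: m_assoc[symmetric] Units_closed)
  finally show ?thesis .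
qed

lemma (in ring) reflexive_inverse_zero: "reflexive_inverse R \<zero> \<zero>"
  by (simp add: reflexive_inverse_def)

lemma (in ring) reflexive_inverse_of_zero:
  assumes "reflexive_inverse R \<zero> b" shows "b = \<zero>"
  using assms unfolding reflexive_inverse_def by (metis l_null r_null)

lemma (in ring) eq_of_minus_eq_zero:
  assumes "u \<in> carrier R" "v \<in> carrier R" "u \<ominus> v = \<zero>"
  shows "u = v"
proof -
  have "u = (u \<ominus> v) \<oplus> v" using assms(1,2) by (simp add: minus_eq a_assoc l_neg)
  then show ?thesis using assms by simp
qed

lemma (in ring) reflexive_inverse_perturb_right:
  assumes a: "a \<in> carrier R" and b: "reflexive_inverse R a b" and g: "g \<in> carrier R"
    and ag: "a \<otimes> g = \<zero>" and gab: "g \<otimes> a \<otimes> b = g"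
  shows "reflexive_inverse R a (b \<oplus> g)"
proof -
  have bc: "b \<in> carrier R" and aba: "a \<otimes> b \<otimes> a = a" and bab: "b \<otimes> a \<otimes> b = b"
    using b by (simp_all add: reflexive_inverse_def)
  have "a \<otimes> (b \<oplus> g) \<otimes> a = a \<otimes> b \<otimes> a \<oplus> a \<otimes> g \<otimes> a"
    using a bc g by (simp add: r_distr l_distr)
  also have "\<dots> = a" using a aba ag by simp
  finally have 1: "a \<otimes> (b \<oplus> g) \<otimes> a = a" .
  have "(b \<oplus> g) \<otimes> a \<otimes> (b \<oplus> g) = b \<otimes> a \<otimes> b \<oplus> b \<otimes> (a \<otimes> g) \<oplus> g \<otimes> a \<otimes> b \<oplus> g \<otimes> (a \<otimes> g)"
    using a bc g by (simp add: r_distr l_distr m_assoc a_ac)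
  also have "\<dots> = b \<oplus> g" using bab gab ag bc g by simp
  finally show ?thesis using 1 bc g by (simp add: reflexive_inverse_def)
qed

lemma (in ring) reflexive_inverse_perturb_left:
  assumes a: "a \<in> carrier R" and b: "reflexive_inverse R a b" and g: "g \<in> carrier R"
    and ga: "g \<otimes> a = \<zero>" and bag: "b \<otimes> a \<otimes> g = g"
  shows "reflexive_inverse R a (b \<oplus> g)"
proof -
  have bc: "b \<in> carrier R" and aba: "a \<otimes> b \<otimes> a = a" and bab: "b \<otimes> a \<otimes> b = b"
    using b by (simp_all add: reflexive_inverse_def)
  have "a \<otimes> (b \<oplus> g) \<otimes> a = a \<otimes> b \<otimes> a \<oplus> a \<otimes> (g \<otimes> a)"
    using a bc g by (simp add: r_distr l_distr m_assoc)
  also have "\<dots> = a" using a aba ga by simp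
  finally have 1: "a \<otimes> (b \<oplus> g) \<otimes> a = a" .
  have "(b \<oplus> g) \<otimes> a \<otimes> (b \<oplus> g) = b \<otimes> a \<otimes> b \<oplus> b \<otimes> a \<otimes> g \<oplus> (g \<otimes> a) \<otimes> (b \<oplus> g)"
    using a bc g by (simp add: r_distr l_distr m_assoc a_ac)
  also have "\<dots> = b \<oplus> g" using bab bag ga bc g by simp
  finally show ?thesis using 1 bc g by (simp add: reflexive_inverse_def)
qed

text \<open>So uniqueness forces those perturbations to vanish: the absorption identities.\<close>
lemma (in ring) unique_reflexive_inverse_absorbs:
  assumes a: "a \<in> carrier R" and b: "reflexive_inverse R a b"
    and unique: "\<And>b'. reflexive_inverse R a b' \<Longrightarrow> b' = b"
    and x: "x \<in> carrier R"
  shows "x \<otimes> (a \<otimes> b) = b \<otimes> a \<otimes> x \<otimes> (a \<otimes> b)"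
    and "b \<otimes> a \<otimes> x = b \<otimes> a \<otimes> x \<otimes> (a \<otimes> b)"
proof -
  have bc: "b \<in> carrier R" and aba: "a \<otimes> b \<otimes> a = a"
    using b by (simp_all add: reflexive_inverse_def)
  have no_perturbation: "g = \<zero>" if "g \<in> carrier R" "reflexive_inverse R a (b \<oplus> g)" for g
    using unique[OF that(2)] that(1) bc by simp
  have abab: "a \<otimes> b \<otimes> (a \<otimes> b) = a \<otimes> b"
    using a bc aba by (simp add: m_assoc[symmetric])
  have baba: "b \<otimes> a \<otimes> (b \<otimes> a) = b \<otimes> a"
    using a bc aba by (simp add: m_assoc)
  define g where "g = x \<otimes> (a \<otimes> b) \<ominus> b \<otimes> a \<otimes> x \<otimes> (a \<otimes> b)"
  have gc: "g \<in> carrier R" unfolding g_def using a bc x by simp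
  have "a \<otimes> g = a \<otimes> x \<otimes> (a \<otimes> b) \<ominus> (a \<otimes> b \<otimes> a) \<otimes> x \<otimes> (a \<otimes> b)"
    unfolding g_def using a bc x by (simp add: minus_eq r_distr r_minus m_assoc)
  then have "a \<otimes> g = \<zero>" using aba a bc x by (simp add: minus_eq r_neg)
  moreover have "g \<otimes> a \<otimes> b = g"
    unfolding g_def using a bc x abab by (simp add: minus_eq l_distr l_minus m_assoc)
  ultimately have "g = \<zero>" using no_perturbation reflexive_inverse_perturb_right[OF a b gc] gc by blast
  then show "x \<otimes> (a \<otimes> b) = b \<otimes> a \<otimes> x \<otimes> (a \<otimes> b)"
    using eq_of_minus_eq_zero[of "x \<otimes> (a \<otimes> b)" "b \<otimes> a \<otimes> x \<otimes> (a \<otimes> b)"] a bc x unfolding g_def by blast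
  define h where "h = b \<otimes> a \<otimes> x \<ominus> b \<otimes> a \<otimes> x \<otimes> (a \<otimes> b)"
  have hc: "h \<in> carrier R" unfolding h_def using a bc x by simp
  have "h \<otimes> a = b \<otimes> a \<otimes> x \<otimes> a \<ominus> b \<otimes> a \<otimes> x \<otimes> (a \<otimes> b \<otimes> a)"
    unfolding h_def using a bc x by (simp add: minus_eq l_distr l_minus m_assoc)
  then have "h \<otimes> a = \<zero>" using aba a bc x by (simp add: minus_eq r_neg)
  moreover have "b \<otimes> a \<otimes> h = h"
    unfolding h_def using a bc x baba by (simp add: minus_eq r_distr r_minus m_assoc[symmetric])
  ultimately have "h = \<zero>" using no_perturbation reflexive_inverse_perturb_left[OF a b hc] hc by blast
  then show "b \<otimes> a \<otimes> x = b \<otimes> a \<otimes> x \<otimes> (a \<otimes> b)"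
    using eq_of_minus_eq_zero[of "b \<otimes> a \<otimes> x" "b \<otimes> a \<otimes> x \<otimes> (a \<otimes> b)"] a bc x unfolding h_def by blast
qed


lemma superregular_in_iff:
  "superregular_in (carrier R) (mult R) a \<longleftrightarrow> a \<in> carrier R \<and> (\<exists>!b. reflexive_inverse R a b)"
  unfolding superregular_in_def regular_in_def reflexive_inverse_def by blast

lemma invertible_in_iff_Units: "invertible_in (carrier R) (mult R) (one R) a \<longleftrightarrow> a \<in> Units R"
  unfolding invertible_in_def Units_def by blast

lemma (in ring) unique_reflexive_inverse_if_unit_or_zero:
  assumes "a = \<zero> \<or> a \<in> Units R"
  shows "\<exists>!b. reflexive_inverse R a b"
  using assms reflexive_inverse_zero reflexive_inverse_of_zero
    reflexive_inverse_inv reflexive_inverse_of_unit by metis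

section \<open>Connected components and restriction\<close>

definition cmp :: "'a::order set \<Rightarrow> 'a \<Rightarrow> 'a set" where
  "cmp P x = (comp_rel P)\<^sup>* `` {x}"

lemma components_eq: "components P = cmp P ` P"
  by (simp add: components_def cmp_def)

lemma cmp_self: "x \<in> cmp P x"
  by (simp add: cmp_def)

lemma cmp_subset: "x0 \<in> P \<Longrightarrow> cmp P x0 \<subseteq> P"
proof
  fix z assume x0: "x0 \<in> P" and "z \<in> cmp P x0"
  then have "(x0, z) \<in> (comp_rel P)\<^sup>*" by (simp add: cmp_def)
  then show "z \<in> P" by (induction rule: rtrancl_induct) (use x0 in \<open>auto simp: comp_rel_def\<close>)
qed

lemma cmp_closed:
  assumes "x0 \<in> P" "x \<in> cmp P x0" "z \<in> P" "x \<le> z \<or> z \<le> x"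
  shows "z \<in> cmp P x0"
proof -
  have "(x, z) \<in> comp_rel P" using assms cmp_subset by (auto simp: comp_rel_def)
  then show ?thesis using assms(2) unfolding cmp_def by (auto intro: rtrancl_into_rtrancl)
qed

lemma cmp_eq:
  assumes "x \<in> cmp P x0"
  shows "cmp P x = cmp P x0"
proof -
  have sym: "sym ((comp_rel P)\<^sup>*)" by (rule sym_rtrancl) (auto simp: sym_def comp_rel_def)
  have "(x0, x) \<in> (comp_rel P)\<^sup>*" using assms by (simp add: cmp_def)
  moreover then have "(x, x0) \<in> (comp_rel P)\<^sup>*" using sym by (auto simp: sym_def)
  ultimately show ?thesis unfolding cmp_def by (auto intro: rtrancl_trans)
qed

definition connected_poset :: "'a::order set \<Rightarrow> bool" where
  "connected_poset Q \<longleftrightarrow> (\<forall>x\<in>Q. \<forall>y\<in>Q. (x, y) \<in> (comp_rel Q)\<^sup>*)"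

text \<open>Every component is connected as a poset in its own right: a chain of comparabilities
  starting in the component never leaves it.\<close>
lemma connected_cmp:
  assumes x0: "x0 \<in> P"
  shows "connected_poset (cmp P x0)"
proof -
  let ?C = "cmp P x0"
  have path: "(x0, z) \<in> (comp_rel ?C)\<^sup>*" if "z \<in> ?C" for z
  proof -
    from that have "(x0, z) \<in> (comp_rel P)\<^sup>*" by (simp add: cmp_def)
    then show ?thesis
    proof (induction rule: rtrancl_induct)
      case (step y z)
      then have "y \<in> ?C" "z \<in> ?C" by (simp_all add: cmp_def)
      with step.hyps(2) have "(y, z) \<in> comp_rel ?C" by (simp add: comp_rel_def)
      with step.IH show ?case by (rule rtrancl_into_rtrancl)
    qed simp
  qed
  have "sym ((comp_rel ?C)\<^sup>*)" by (rule sym_rtrancl) (auto simp: sym_def comp_rel_def)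
  then show ?thesis
    unfolding connected_poset_def using path by (meson rtrancl_trans symD)
qed

lemma restrict_FI:
  assumes C: "C \<subseteq> P" and a: "a \<in> FI P"
  shows "restrict_to C a \<in> FI C"
proof -
  have "restrict_to C a \<in> incidence C"
    using FI_supportD[OF a] by (auto simp: incidence_def restrict_to_def)
  moreover have "finite {(u, v). u \<in> C \<and> v \<in> C \<and> x \<le> u \<and> u < v \<and> v \<le> y \<and> restrict_to C a u v \<noteq> 0}"
    if "x \<in> C" "y \<in> C" for x y
  proof (rule finite_subset)
    show "{(u, v). u \<in> C \<and> v \<in> C \<and> x \<le> u \<and> u < v \<and> v \<le> y \<and> restrict_to C a u v \<noteq> 0}
      \<subseteq> strict_support P a x y" using C by (auto simp: strict_support_def restrict_to_def)
    show "finite (strict_support P a x y)" using finite_strict_support[OF a] that C by blast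
  qed
  ultimately show ?thesis by (simp add: FI_def finitary_def)
qed

text \<open>Restriction to a component is multiplicative: every z between two points of the
  component lies in it.\<close>
lemma restrict_conv:
  assumes x0: "x0 \<in> P"
  shows "restrict_to (cmp P x0) (conv P a b)
    = conv (cmp P x0) (restrict_to (cmp P x0) a) (restrict_to (cmp P x0) b)"
proof (intro ext)
  fix x y
  let ?C = "cmp P x0"
  show "restrict_to ?C (conv P a b) x y = conv ?C (restrict_to ?C a) (restrict_to ?C b) x y"
  proof (cases "x \<in> ?C \<and> y \<in> ?C")
    case True
    then have between: "z \<in> ?C" if "z \<in> P" "x \<le> z" for z
      using cmp_closed[OF x0 _ that(1)] that(2) by blast
    have "{z \<in> ?C. x \<le> z \<and> z \<le> y \<and> restrict_to ?C a x z \<noteq> 0} = {z \<in> P. x \<le> z \<and> z \<le> y \<and> a x z \<noteq> 0}"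
      using True between cmp_subset[OF x0] by (auto simp: restrict_to_def)
    moreover have "restrict_to ?C a x z * restrict_to ?C b z y = a x z * b z y" if "z \<in> P" "x \<le> z" for z
      using True between[OF that] by (simp add: restrict_to_def)
    ultimately show ?thesis
      using True cmp_subset[OF x0] by (auto simp: conv_def restrict_to_def intro!: sum.cong)
  next
    case False
    then show ?thesis unfolding restrict_to_def using conv_outside[of x ?C y] by auto
  qed
qed

text \<open>Incidence functions are determined by their restrictions to the components,
  since every nonzero entry sits inside a single component.\<close>
lemma eq_by_components:
  assumes h1: "h1 \<in> incidence P" and h2: "h2 \<in> incidence P"
    and eq: "\<And>x0. x0 \<in> P \<Longrightarrow> restrict_to (cmp P x0) h1 = restrict_to (cmp P x0) h2"
  shows "h1 = h2"
proof (intro ext)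
  fix x y
  show "h1 x y = h2 x y"
  proof (cases "h1 x y = 0 \<and> h2 x y = 0")
    case False
    then have "x \<in> P" "y \<in> P" "x \<le> y"
      using incidence_supportD[OF h1] incidence_supportD[OF h2] by blast+
    then have "y \<in> cmp P x" using cmp_closed[OF _ cmp_self] by blast
    then show ?thesis
      using fun_cong[OF fun_cong[OF eq[OF \<open>x \<in> P\<close>]], of x y] cmp_self[of x P]
      by (simp add: restrict_to_def)
  qed simp
qed

definition glue :: "'a::order set \<Rightarrow> ('a set \<Rightarrow> 'a \<Rightarrow> 'a \<Rightarrow> 'k::field) \<Rightarrow> 'a \<Rightarrow> 'a \<Rightarrow> 'k" where
  "glue P c = (\<lambda>x y. if x \<in> P then c (cmp P x) x y else 0)"

lemma restrict_glue:
  assumes c: "\<And>x. x \<in> P \<Longrightarrow> c (cmp P x) \<in> FI (cmp P x)" and x0: "x0 \<in> P"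
  shows "restrict_to (cmp P x0) (glue P c) = c (cmp P x0)"
proof (intro ext)
  fix x y
  show "restrict_to (cmp P x0) (glue P c) x y = c (cmp P x0) x y"
  proof (cases "x \<in> cmp P x0 \<and> y \<in> cmp P x0")
    case True
    then have "x \<in> P" "cmp P x = cmp P x0" using cmp_subset[OF x0] cmp_eq by blast+
    then show ?thesis using True by (simp add: restrict_to_def glue_def)
  next
    case False
    then show ?thesis using FI_supportD[OF c[OF x0], of x y] by (auto simp: restrict_to_def)
  qed
qed

lemma glue_FI:
  assumes c: "\<And>x. x \<in> P \<Longrightarrow> c (cmp P x) \<in> FI (cmp P x)"
  shows "glue P c \<in> FI P"
proof -
  have support: "x \<in> P \<and> y \<in> cmp P x \<and> x \<le> y" if "glue P c x y \<noteq> 0" for x y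
    using that FI_supportD[OF c] cmp_self by (auto simp: glue_def split: if_splits)
  have "glue P c \<in> incidence P"
    unfolding incidence_def using support cmp_subset by blast
  moreover have "finite {(u, v). u \<in> P \<and> v \<in> P \<and> x \<le> u \<and> u < v \<and> v \<le> y \<and> glue P c u v \<noteq> 0}"
    if x: "x \<in> P" and y: "y \<in> P" and "x < y" for x y
  proof (rule finite_subset)
    let ?C = "cmp P x"
    have yC: "y \<in> ?C" using cmp_closed[OF x cmp_self y] \<open>x < y\<close> by (simp add: less_imp_le)
    show "finite (strict_support ?C (c ?C) x y)"
      using finite_strict_support[OF c[OF x] cmp_self yC] .
    show "{(u, v). u \<in> P \<and> v \<in> P \<and> x \<le> u \<and> u < v \<and> v \<le> y \<and> glue P c u v \<noteq> 0}
      \<subseteq> strict_support ?C (c ?C) x y"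
    proof clarify
      fix u v assume uv: "u \<in> P" "v \<in> P" "x \<le> u" "u < v" "v \<le> y" "glue P c u v \<noteq> 0"
      have uC: "u \<in> ?C" using cmp_closed[OF x cmp_self uv(1)] uv(3) by simp
      then have "cmp P u = ?C" by (rule cmp_eq)
      moreover have "v \<in> ?C" using cmp_closed[OF x yC uv(2)] uv(5) by simp
      ultimately show "(u, v) \<in> strict_support ?C (c ?C) x y"
        using uv uC by (simp add: strict_support_def glue_def)
    qed
  qed
  ultimately show ?thesis by (simp add: FI_def finitary_def)
qed

section \<open>Superregularity is decided componentwise\<close>

lemma restrict_reflexive_inverse:
  assumes x0: "x0 \<in> P" and b: "reflexive_inverse (FI_ring P) a b"
  shows "reflexive_inverse (FI_ring (cmp P x0)) (restrict_to (cmp P x0) a) (restrict_to (cmp P x0) b)"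
proof -
  let ?r = "restrict_to (cmp P x0)"
  have "b \<in> FI P" "conv P (conv P a b) a = a" "conv P (conv P b a) b = b"
    using b by (simp_all add: reflexive_inverse_def)
  then have "?r b \<in> FI (cmp P x0)" "?r (conv P (conv P a b) a) = ?r a" "?r (conv P (conv P b a) b) = ?r b"
    using restrict_FI[OF cmp_subset[OF x0]] by simp_all
  then show ?thesis by (simp add: reflexive_inverse_def restrict_conv[OF x0])
qed

lemma reflexive_inverse_by_components:
  assumes a: "a \<in> FI P" and b: "b \<in> FI P"
    and local: "\<And>x0. x0 \<in> P \<Longrightarrow>
      reflexive_inverse (FI_ring (cmp P x0)) (restrict_to (cmp P x0) a) (restrict_to (cmp P x0) b)"
  shows "reflexive_inverse (FI_ring P) a b"
proof -
  have "conv P (conv P a b) a = a"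
  proof (rule eq_by_components)
    show "conv P (conv P a b) a \<in> incidence P" using a b by (simp add: FI_incidence conv_FI)
    show "a \<in> incidence P" using a by (rule FI_incidence)
    show "restrict_to (cmp P x0) (conv P (conv P a b) a) = restrict_to (cmp P x0) a" if "x0 \<in> P" for x0
      using local[OF that] by (simp add: restrict_conv[OF that] reflexive_inverse_def)
  qed
  moreover have "conv P (conv P b a) b = b"
  proof (rule eq_by_components)
    show "conv P (conv P b a) b \<in> incidence P" using a b by (simp add: FI_incidence conv_FI)
    show "b \<in> incidence P" using b by (rule FI_incidence)
    show "restrict_to (cmp P x0) (conv P (conv P b a) b) = restrict_to (cmp P x0) b" if "x0 \<in> P" for x0
      using local[OF that] by (simp add: restrict_conv[OF that] reflexive_inverse_def)
  qed
  ultimately show ?thesis using b by (simp add: reflexive_inverse_def)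
qed

text \<open>A unique reflexive inverse restricts to a unique one on each component: another
  reflexive inverse c there could be glued with b on the other components.\<close>
lemma restrict_unique_reflexive_inverse:
  assumes a: "a \<in> FI P" and b: "reflexive_inverse (FI_ring P) a b"
    and unique: "\<And>b'. reflexive_inverse (FI_ring P) a b' \<Longrightarrow> b' = b" and x0: "x0 \<in> P"
  shows "\<exists>!c. reflexive_inverse (FI_ring (cmp P x0)) (restrict_to (cmp P x0) a) c"
proof (rule ex1I)
  let ?C = "cmp P x0"
  show "reflexive_inverse (FI_ring ?C) (restrict_to ?C a) (restrict_to ?C b)"
    by (rule restrict_reflexive_inverse[OF x0 b])
  fix c assume c: "reflexive_inverse (FI_ring ?C) (restrict_to ?C a) c"
  define cs where "cs D = (if D = ?C then c else restrict_to D b)" for D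
  have cs_FI: "cs (cmp P x) \<in> FI (cmp P x)" if "x \<in> P" for x
    using c restrict_reflexive_inverse[OF that b] by (simp add: cs_def reflexive_inverse_def)
  have "reflexive_inverse (FI_ring P) a (glue P cs)"
  proof (rule reflexive_inverse_by_components[OF a glue_FI[of P cs, OF cs_FI]])
    fix x assume "x \<in> P"
    then have "restrict_to (cmp P x) (glue P cs) = cs (cmp P x)"
      using restrict_glue[of P cs x, OF cs_FI] by blast
    then show "reflexive_inverse (FI_ring (cmp P x)) (restrict_to (cmp P x) a)
        (restrict_to (cmp P x) (glue P cs))"
      using c restrict_reflexive_inverse[OF \<open>x \<in> P\<close> b]
      by (cases "cmp P x = ?C") (simp_all add: cs_def)
  qed
  then have "glue P cs = b" by (rule unique)
  then have "restrict_to ?C b = cs ?C" using restrict_glue[of P cs, OF cs_FI x0] by simp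
  then show "c = restrict_to ?C b" by (simp add: cs_def)
qed

lemma glue_unique_reflexive_inverse:
  assumes a: "a \<in> FI P"
    and local: "\<And>x0. x0 \<in> P \<Longrightarrow> \<exists>!c. reflexive_inverse (FI_ring (cmp P x0)) (restrict_to (cmp P x0) a) c"
  shows "\<exists>!b. reflexive_inverse (FI_ring P) a b"
proof -
  define cs where "cs D = (THE c. reflexive_inverse (FI_ring D) (restrict_to D a) c)" for D
  have cs: "reflexive_inverse (FI_ring (cmp P x)) (restrict_to (cmp P x) a) c \<longleftrightarrow> c = cs (cmp P x)"
    if "x \<in> P" for x c
    using theI'[OF local[OF that]] the1_equality[OF local[OF that]] unfolding cs_def by blast
  have cs_FI: "cs (cmp P x) \<in> FI (cmp P x)" if "x \<in> P" for x
    using cs[OF that, of "cs (cmp P x)"] by (simp add: reflexive_inverse_def)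
  have restrict_glue_cs: "restrict_to (cmp P x) (glue P cs) = cs (cmp P x)" if "x \<in> P" for x
    by (rule restrict_glue[of P cs, OF cs_FI that])
  show ?thesis
  proof (rule ex1I)
    show "reflexive_inverse (FI_ring P) a (glue P cs)"
    proof (rule reflexive_inverse_by_components[OF a glue_FI[of P cs, OF cs_FI]])
      fix x assume "x \<in> P"
      then show "reflexive_inverse (FI_ring (cmp P x)) (restrict_to (cmp P x) a)
          (restrict_to (cmp P x) (glue P cs))"
        using cs[of x "cs (cmp P x)"] restrict_glue_cs[of x] by simp
    qed
    fix b assume b: "reflexive_inverse (FI_ring P) a b"
    show "b = glue P cs"
    proof (rule eq_by_components)
      show "b \<in> incidence P" using b by (simp add: reflexive_inverse_def FI_incidence)
      show "glue P cs \<in> incidence P" using glue_FI[of P cs, OF cs_FI] by (rule FI_incidence)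
      show "restrict_to (cmp P x) b = restrict_to (cmp P x) (glue P cs)" if "x \<in> P" for x
        using cs[OF that] restrict_reflexive_inverse[OF that b] restrict_glue_cs[OF that] by simp
    qed
  qed
qed

theorem unique_reflexive_inverse_iff_components:
  assumes a: "a \<in> FI P"
  shows "(\<exists>!b. reflexive_inverse (FI_ring P) a b) \<longleftrightarrow>
    (\<forall>x0\<in>P. \<exists>!c. reflexive_inverse (FI_ring (cmp P x0)) (restrict_to (cmp P x0) a) c)"
proof
  assume "\<exists>!b. reflexive_inverse (FI_ring P) a b"
  then obtain b where "reflexive_inverse (FI_ring P) a b"
    and "\<And>b'. reflexive_inverse (FI_ring P) a b' \<Longrightarrow> b' = b" by blast
  then show "\<forall>x0\<in>P. \<exists>!c. reflexive_inverse (FI_ring (cmp P x0)) (restrict_to (cmp P x0) a) c"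
    using restrict_unique_reflexive_inverse[OF a] by blast
qed (use glue_unique_reflexive_inverse[OF a] in blast)

section \<open>Connected posets: superregular series are units or zero\<close>

definition matrix_unit :: "'a \<Rightarrow> 'a \<Rightarrow> 'a \<Rightarrow> 'a \<Rightarrow> 'k::field" where
  "matrix_unit p q = (\<lambda>x y. if x = p \<and> y = q then 1 else 0)"

lemma matrix_unit_FI:
  assumes "p \<in> Q" "q \<in> Q" "p \<le> q"
  shows "matrix_unit p q \<in> FI Q"
proof -
  have "matrix_unit p q \<in> incidence Q" using assms by (simp add: incidence_def matrix_unit_def)
  moreover have "finite {(u, v). u \<in> Q \<and> v \<in> Q \<and> x \<le> u \<and> u < v \<and> v \<le> y \<and> matrix_unit p q u v \<noteq> 0}"
    for x y :: 'a
    by (rule finite_subset[of _ "{(p, q)}"]) (simp_all add: matrix_unit_def subset_iff)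
  ultimately show ?thesis unfolding FI_def finitary_def by blast
qed

lemma conv_matrix_unit_left:
  assumes pq: "p \<in> Q" "q \<in> Q" "p \<le> q" and e: "e \<in> incidence Q"
  shows "conv Q (matrix_unit p q) e u v = (if u = p then e q v else 0)"
  by (subst conv_sum[OF matrix_unit_FI[OF pq] e, of "{q}"]) (simp_all add: matrix_unit_def split: if_splits)

lemma conv_matrix_unit_right:
  assumes pq: "p \<in> Q" "q \<in> Q" "p \<le> q" and f: "f \<in> FI Q"
  shows "conv Q f (matrix_unit p q) u v = (if v = q then f u p else 0)"
  by (subst conv_sum[OF f FI_incidence[OF matrix_unit_FI[OF pq]], of "{p}"])
    (simp_all add: matrix_unit_def split: if_splits)

lemma conv_matrix_unit_middle:
  assumes pq: "p \<in> Q" "q \<in> Q" "p \<le> q" and f: "f \<in> FI Q" and e: "e \<in> incidence Q"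
  shows "conv Q (conv Q f (matrix_unit p q)) e u v = f u p * e q v"
  by (subst conv_sum[OF conv_FI[OF f matrix_unit_FI[OF pq]] e, of "{q}"])
    (simp_all add: conv_matrix_unit_right[OF pq f] split: if_splits)

text \<open>The absorption identities of a unique reflexive inverse, evaluated at the matrix units:
  with e = ab and f = ba they relate single entries of e and f.\<close>
lemma absorption_entries:
  assumes a: "a \<in> FI Q" and b: "reflexive_inverse (FI_ring Q) a b"
    and unique: "\<And>b'. reflexive_inverse (FI_ring Q) a b' \<Longrightarrow> b' = b"
    and pq: "p \<in> Q" "q \<in> Q" "p \<le> q"
  shows "(if u = p then conv Q a b q v else 0) = conv Q b a u p * conv Q a b q v"
    and "(if v = q then conv Q b a u p else 0) = conv Q b a u p * conv Q a b q v"
proof -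
  interpret R: ring "FI_ring Q" by (rule FI_ring)
  have E: "matrix_unit p q \<in> carrier (FI_ring Q)" using matrix_unit_FI[OF pq] by simp
  have bFI: "b \<in> FI Q" using b by (simp add: reflexive_inverse_def)
  have e: "conv Q a b \<in> incidence Q" using conv_FI[OF a bFI] by (rule FI_incidence)
  have f: "conv Q b a \<in> FI Q" using conv_FI[OF bFI a] .
  note absorbs = R.unique_reflexive_inverse_absorbs[OF _ b unique E, simplified]
  show "(if u = p then conv Q a b q v else 0) = conv Q b a u p * conv Q a b q v"
    using fun_cong[OF fun_cong[OF absorbs(1)[OF a]], of u v]
    by (simp add: conv_matrix_unit_left[OF pq e] conv_matrix_unit_middle[OF pq f e])
  show "(if v = q then conv Q b a u p else 0) = conv Q b a u p * conv Q a b q v"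
    using fun_cong[OF fun_cong[OF absorbs(2)[OF a]], of u v]
    by (simp add: conv_matrix_unit_right[OF pq f] conv_matrix_unit_middle[OF pq f e])
qed

lemma diagonal_idempotent:
  assumes a: "a \<in> FI Q" and b: "reflexive_inverse (FI_ring Q) a b"
    and unique: "\<And>b'. reflexive_inverse (FI_ring Q) a b' \<Longrightarrow> b' = b" and x: "x \<in> Q"
  shows "conv Q b a x x = conv Q a b x x"
    and "conv Q a b x x * conv Q a b x x = conv Q a b x x"
proof -
  note entries = absorption_entries[OF a b unique x x order_refl, of x x]
  have e: "conv Q a b x x = conv Q b a x x * conv Q a b x x"
    using entries(1) by (simp only: if_P[OF refl])
  have f: "conv Q b a x x = conv Q b a x x * conv Q a b x x"
    using entries(2) by (simp only: if_P[OF refl])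
  show diag: "conv Q b a x x = conv Q a b x x" using f e by (rule trans[OF _ sym])
  show "conv Q a b x x * conv Q a b x x = conv Q a b x x" using e[unfolded diag] by (rule sym)
qed

lemma diagonal_comparable:
  assumes a: "a \<in> FI Q" and b: "reflexive_inverse (FI_ring Q) a b"
    and unique: "\<And>b'. reflexive_inverse (FI_ring Q) a b' \<Longrightarrow> b' = b"
    and pq: "p \<in> Q" "q \<in> Q" "p \<le> q"
  shows "conv Q a b p p = conv Q a b q q"
proof -
  have "conv Q a b q q = conv Q a b p p * conv Q a b q q"
    using absorption_entries(1)[OF a b unique pq, of p q] diagonal_idempotent(1)[OF a b unique pq(1)]
    by simp
  moreover have "conv Q a b p p = conv Q a b p p * conv Q a b q q"
    using absorption_entries(2)[OF a b unique pq, of q p] diagonal_idempotent(1)[OF a b unique pq(1)]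
    by simp
  ultimately show ?thesis by simp
qed

lemma diagonal_constant:
  assumes Q: "connected_poset Q" and a: "a \<in> FI Q" and b: "reflexive_inverse (FI_ring Q) a b"
    and unique: "\<And>b'. reflexive_inverse (FI_ring Q) a b' \<Longrightarrow> b' = b"
    and x: "x \<in> Q" and y: "y \<in> Q"
  shows "conv Q a b x x = conv Q a b y y"
proof -
  have "(x, y) \<in> (comp_rel Q)\<^sup>*" using Q x y by (simp add: connected_poset_def)
  then show ?thesis
  proof (induction rule: rtrancl_induct)
    case (step y z)
    from step.hyps(2) have "y \<in> Q" "z \<in> Q" "y \<le> z \<or> z \<le> y" by (simp_all add: comp_rel_def)
    then have "conv Q a b y y = conv Q a b z z" using diagonal_comparable[OF a b unique] by metis
    with step.IH show ?case by simp
  qed simp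
qed

text \<open>If the diagonal of ab vanishes, then so does every row of ab, and hence a = aba.\<close>
lemma zero_if_diagonal_zero:
  assumes a: "a \<in> FI Q" and b: "reflexive_inverse (FI_ring Q) a b"
    and unique: "\<And>b'. reflexive_inverse (FI_ring Q) a b' \<Longrightarrow> b' = b"
    and zero: "\<And>x. x \<in> Q \<Longrightarrow> conv Q a b x x = 0"
  shows "a = (\<lambda>x y. 0)"
proof -
  have bFI: "b \<in> FI Q" and aba: "conv Q (conv Q a b) a = a"
    using b by (simp_all add: reflexive_inverse_def)
  have "conv Q a b = (\<lambda>x y. 0)"
  proof (intro ext)
    fix x v
    show "conv Q a b x v = 0"
    proof (cases "x \<in> Q")
      case True
      then show ?thesis
        using absorption_entries(1)[OF a b unique True True order_refl, of x v]
          diagonal_idempotent(1)[OF a b unique True] zero[OF True] by simp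
    qed (use FI_supportD[OF conv_FI[OF a bFI], of x v] in blast)
  qed
  then show ?thesis using aba by (simp add: conv_zero_left)
qed

lemma unit_if_diagonal_one:
  assumes a: "a \<in> FI Q" and b: "reflexive_inverse (FI_ring Q) a b"
    and unique: "\<And>b'. reflexive_inverse (FI_ring Q) a b' \<Longrightarrow> b' = b"
    and one: "\<And>x. x \<in> Q \<Longrightarrow> conv Q a b x x = 1"
  shows "a \<in> Units (FI_ring Q)"
proof -
  have bFI: "b \<in> FI Q" using b by (simp add: reflexive_inverse_def)
  have diag: "conv Q a b x x = 1" "conv Q b a x x = 1" if "x \<in> Q" for x
    using one[OF that] diagonal_idempotent(1)[OF a b unique that] by simp_all
  have "conv Q a b = one_FI Q"
  proof (intro ext)
    fix x v
    show "conv Q a b x v = one_FI Q x v"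
    proof (cases "x \<in> Q")
      case True
      then show ?thesis
        using absorption_entries(2)[OF a b unique True True order_refl, where u = x and v = v] diag[OF True]
        by (cases "v = x") (auto simp: one_FI_def)
    qed (use FI_supportD[OF conv_FI[OF a bFI], of x v] in \<open>auto simp: one_FI_def\<close>)
  qed
  moreover have "conv Q b a = one_FI Q"
  proof (intro ext)
    fix u x
    show "conv Q b a u x = one_FI Q u x"
    proof (cases "x \<in> Q")
      case True
      then show ?thesis
        using absorption_entries(1)[OF a b unique True True order_refl, of u x] diag[OF True]
        by (cases "u = x") (auto simp: one_FI_def)
    qed (use FI_supportD[OF conv_FI[OF bFI a], of u x] in \<open>auto simp: one_FI_def\<close>)
  qed
  ultimately show ?thesis using a bFI unfolding Units_def by auto
qed

text \<open>Hence on a connected poset a series with a unique reflexive inverse is a unit or zero: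
  the constant diagonal of ab is an idempotent scalar, i.e. 0 or 1.\<close>
theorem connected_unit_or_zero:
  assumes Q: "connected_poset Q" and a: "a \<in> FI Q" and b: "reflexive_inverse (FI_ring Q) a b"
    and unique: "\<And>b'. reflexive_inverse (FI_ring Q) a b' \<Longrightarrow> b' = b"
  shows "a = (\<lambda>x y. 0) \<or> a \<in> Units (FI_ring Q)"
proof (cases "\<forall>x\<in>Q. conv Q a b x x = 0")
  case True
  then show ?thesis using zero_if_diagonal_zero[OF a b unique] by blast
next
  case False
  then obtain x0 where x0: "x0 \<in> Q" and nonzero: "conv Q a b x0 x0 \<noteq> 0" by blast
  have "conv Q a b x0 x0 = 1"
    using diagonal_idempotent(2)[OF a b unique x0] nonzero by (metis mult_cancel_right1)
  then have "a \<in> Units (FI_ring Q)"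
    using unit_if_diagonal_one[OF a b unique] diagonal_constant[OF Q a b unique _ x0] by metis
  then show ?thesis ..
qed

lemma component_unique_reflexive_inverse_iff:
  assumes a: "a \<in> FI P" and x0: "x0 \<in> P"
  shows "(\<exists>!c. reflexive_inverse (FI_ring (cmp P x0)) (restrict_to (cmp P x0) a) c) \<longleftrightarrow>
    restrict_to (cmp P x0) a = (\<lambda>x y. 0) \<or> restrict_to (cmp P x0) a \<in> Units (FI_ring (cmp P x0))"
proof
  assume "\<exists>!c. reflexive_inverse (FI_ring (cmp P x0)) (restrict_to (cmp P x0) a) c"
  then obtain c where "reflexive_inverse (FI_ring (cmp P x0)) (restrict_to (cmp P x0) a) c"
    and "\<And>c'. reflexive_inverse (FI_ring (cmp P x0)) (restrict_to (cmp P x0) a) c' \<Longrightarrow> c' = c"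
    by blast
  then show "restrict_to (cmp P x0) a = (\<lambda>x y. 0) \<or> restrict_to (cmp P x0) a \<in> Units (FI_ring (cmp P x0))"
    by (rule connected_unit_or_zero[OF connected_cmp[OF x0] restrict_FI[OF cmp_subset[OF x0] a]])
next
  assume "restrict_to (cmp P x0) a = (\<lambda>x y. 0) \<or> restrict_to (cmp P x0) a \<in> Units (FI_ring (cmp P x0))"
  then show "\<exists>!c. reflexive_inverse (FI_ring (cmp P x0)) (restrict_to (cmp P x0) a) c"
    using ring.unique_reflexive_inverse_if_unit_or_zero[OF FI_ring] by simp
qed

lemma invertible_in_FI_iff: "invertible_in (FI Q) (conv Q) (one_FI Q) a \<longleftrightarrow> a \<in> Units (FI_ring Q)"
  using invertible_in_iff_Units[of "FI_ring Q" a] by simp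

theorem corollary4:
  fixes P :: "'a::order set" and \<alpha> :: "'a \<Rightarrow> 'a \<Rightarrow> 'k::field"
  assumes "\<alpha> \<in> FI P"
  shows "superregular_in (FI P) (conv P) \<alpha> \<longleftrightarrow>
    (\<forall>C \<in> components P. restrict_to C \<alpha> = (\<lambda>x y. 0) \<or>
       invertible_in (FI C) (conv C) (one_FI C) (restrict_to C \<alpha>))"
proof -
  have "superregular_in (FI P) (conv P) \<alpha> \<longleftrightarrow> (\<exists>!b. reflexive_inverse (FI_ring P) \<alpha> b)"
    using superregular_in_iff[of "FI_ring P" \<alpha>] assms by simp
  also have "\<dots> \<longleftrightarrow>
      (\<forall>x0\<in>P. \<exists>!c. reflexive_inverse (FI_ring (cmp P x0)) (restrict_to (cmp P x0) \<alpha>) c)"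
    by (rule unique_reflexive_inverse_iff_components[OF assms])
  also have "\<dots> \<longleftrightarrow> (\<forall>x0\<in>P. restrict_to (cmp P x0) \<alpha> = (\<lambda>x y. 0) \<or>
      restrict_to (cmp P x0) \<alpha> \<in> Units (FI_ring (cmp P x0)))"
    using component_unique_reflexive_inverse_iff[OF assms] by simp
  also have "\<dots> \<longleftrightarrow> (\<forall>C \<in> components P. restrict_to C \<alpha> = (\<lambda>x y. 0) \<or>
      invertible_in (FI C) (conv C) (one_FI C) (restrict_to C \<alpha>))"
    by (simp add: components_eq invertible_in_FI_iff)
  finally show ?thesis .
qed

end
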